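(* There is a constant $c>0$ such that for every integer $n\ge 1$, with $N=2^n$, the $2N\times 2N$ unitary matrix $C_N^{\mathrm{IV}}\oplus (-i)\,S_N^{\mathrm{IV}}$ can be realized exactly by a quantum circuit on $n+1$ qubits (plus at most a constant number of ancilla qubits that start and end in $|0\rangle$) consisting of at most $c\,n^2$ elementary gates. In short, $C_N^{\mathrm{IV}}$ and $S_N^{\mathrm{IV}}$ can be realized with $O(\log^2 N)$ elementary quantum gates.
   Context: Qubit/basis conventions: the state space of $m$ qubits is $\mathbb{C}^{2^m}$ with computational basis $|x\rangle$, $x$ a bit string $b_m\dots b_1$ identified with the integer $\sum_k b_k2^{k-1}$; the most significant bit corresponds to the leftmost tensor factor. Elementary gates: (i) a CNOT between any two qubits, and (ii) any single-qubit gate $I_{2^{m-t}}\otimes U\otimes I_{2^{t-1}}$ with $U\in\mathcal U(2)$ arbitrary. A circuit realizes a unitary $W$ if the product of its gates equals $W$ (ancillas, if any, mapped $|0\rangle\mapsto|0\rangle$). $A\oplus B$ is the block-diagonal matrix with blocks $A,B$. Type IV transforms: $C_N^{\mathrm{IV}}=\sqrt{2/N}\,[\cos((j+\tfrac12)(k+\tfrac12)\pi/N)]_{j,k=0,\dots,N-1}$ and $S_N^{\mathrm{IV}}=\sqrt{2/N}\,[\sin((j+\tfrac12)(k+\tfrac12)\pi/N)]_{j,k=0,\dots,N-1}$; $i=\sqrt{-1}$. *)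

theory Defs
  imports Complex_Main "Jordan_Normal_Form.Matrix"
begin

(* Kronecker (tensor) product of matrices; the left factor is the most significant *)
definition kron :: "complex mat \<Rightarrow> complex mat \<Rightarrow> complex mat" where
  "kron A B = mat (dim_row A * dim_row B) (dim_col A * dim_col B)
     (\<lambda>(i,j). A $$ (i div dim_row B, j div dim_col B) * B $$ (i mod dim_row B, j mod dim_col B))"

definition ctrans :: "complex mat \<Rightarrow> complex mat" where
  "ctrans A = mat (dim_col A) (dim_row A) (\<lambda>(i,j). cnj (A $$ (j,i)))"

definition unitary2 :: "complex mat \<Rightarrow> bool" where
  "unitary2 U \<longleftrightarrow> U \<in> carrier_mat 2 2 \<and> U * ctrans U = 1\<^sub>m 2 \<and> ctrans U * U = 1\<^sub>m 2"

(* bit number k (1-based, k = 1 least significant) of x *)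
definition qbit :: "nat \<Rightarrow> nat \<Rightarrow> nat" where
  "qbit k x = (x div 2 ^ (k - 1)) mod 2"

definition cnot_perm :: "nat \<Rightarrow> nat \<Rightarrow> nat \<Rightarrow> nat" where
  "cnot_perm c t x = (if qbit c x = 1 then
       (if qbit t x = 1 then x - 2 ^ (t - 1) else x + 2 ^ (t - 1)) else x)"

definition cnot_gate :: "nat \<Rightarrow> nat \<Rightarrow> nat \<Rightarrow> complex mat" where
  "cnot_gate m c t = mat (2 ^ m) (2 ^ m) (\<lambda>(i,j). if i = cnot_perm c t j then 1 else 0)"

definition single_gate :: "nat \<Rightarrow> nat \<Rightarrow> complex mat \<Rightarrow> complex mat" where
  "single_gate m t U = kron (kron (1\<^sub>m (2 ^ (m - t))) U) (1\<^sub>m (2 ^ (t - 1)))"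

definition elementary_gate :: "nat \<Rightarrow> complex mat \<Rightarrow> bool" where
  "elementary_gate m G \<longleftrightarrow>
     (\<exists>c t. 1 \<le> c \<and> c \<le> m \<and> 1 \<le> t \<and> t \<le> m \<and> c \<noteq> t \<and> G = cnot_gate m c t) \<or>
     (\<exists>t U. 1 \<le> t \<and> t \<le> m \<and> unitary2 U \<and> G = single_gate m t U)"

(* product of the gates of a circuit on m qubits (first gate of the list applied last) *)
definition circuit_prod :: "nat \<Rightarrow> complex mat list \<Rightarrow> complex mat" where
  "circuit_prod m gs = foldr (\<lambda>G P. G * P) gs (1\<^sub>m (2 ^ m))"

definition ket0 :: "nat \<Rightarrow> complex mat" where
  "ket0 a = mat (2 ^ a) 1 (\<lambda>(i,j). if i = 0 then 1 else 0)"

(* A circuit of elementary gates on m qubits plus a ancilla qubits (least significant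
   tensor factors), starting and ending in |0>, realizes the 2^m x 2^m matrix W *)
definition realizes :: "nat \<Rightarrow> nat \<Rightarrow> complex mat list \<Rightarrow> complex mat \<Rightarrow> bool" where
  "realizes m a gs W \<longleftrightarrow>
     (\<forall>G \<in> set gs. elementary_gate (m + a) G) \<and>
     circuit_prod (m + a) gs * kron (1\<^sub>m (2 ^ m)) (ket0 a) = kron W (ket0 a)"

definition DCT4 :: "nat \<Rightarrow> complex mat" where
  "DCT4 N = mat N N (\<lambda>(j,k). complex_of_real
     (sqrt (2 / real N) * cos ((real j + 1/2) * (real k + 1/2) * pi / real N)))"

definition DST4 :: "nat \<Rightarrow> complex mat" where
  "DST4 N = mat N N (\<lambda>(j,k). complex_of_real
     (sqrt (2 / real N) * sin ((real j + 1/2) * (real k + 1/2) * pi / real N)))"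

definition block_diag :: "complex mat \<Rightarrow> complex mat \<Rightarrow> complex mat" where
  "block_diag A B = four_block_mat A (0\<^sub>m (dim_row A) (dim_col B)) (0\<^sub>m (dim_row B) (dim_col A)) B"

end

theory Submission
  imports Defs
begin

(* With N = 2^n, the direct sum of C_N^IV and -i S_N^IV is the odd-frequency DFT of size 2N,
     G(x, y) = exp (-i pi (x + 1/2) (y + 1/2) / N) / sqrt (2N),
   conjugated by a butterfly B whose row a combines the index a mod N with its mirror image
   2N - 1 - (a mod N). Mirroring an index turns an entry g of G into - cnj g, so B G B^T has
   g + cnj g (a cosine) and g - cnj g (a sine) in its diagonal blocks and zeros elsewhere.
   Expanding (x + 1/2) (y + 1/2) shows that G is, up to a global phase, the quantum Fourier
   transform on n + 1 qubits between two diagonal phase ramps; the QFT takes O(n^2) gates, each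
   controlled phase being two CNOTs and three phase gates. B is a Hadamard and a Pauli Z on the top
   qubit after n CNOTs fanning out from it, and B^T is the mirrored circuit, so no ancilla is needed. *)

subsection \<open>Binary digits of basis indices\<close>

lemma qbit_less_2: "qbit t x < 2"
  by (simp add: qbit_def)

lemma qbit_cases: "qbit t x = 0 \<or> qbit t x = 1"
  using qbit_less_2[of t x] by auto

lemma qbit_Suc_eq_bit: "qbit (Suc k) x = (if bit x k then 1 else 0)"
  unfolding qbit_def by (simp add: bit_iff_odd odd_iff_mod_2_eq_one)

lemma mod_two_pow_Suc: "(x::nat) mod 2 ^ Suc k = qbit (Suc k) x * 2 ^ k + x mod 2 ^ k"
  using mod_mult2_eq[of x "2 ^ k" 2] by (simp add: qbit_def mult.commute)

lemma digit_split: "x = x div 2 ^ Suc s * 2 ^ Suc s + qbit (Suc s) x * 2 ^ s + x mod (2 ^ s :: nat)"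
  using div_mult_mod_eq[of x "2 ^ Suc s"] mod_two_pow_Suc[of x s] by simp

lemma digit_split_div:
  assumes "b < 2" "r < 2 ^ s"
  shows "(X * 2 ^ Suc s + b * 2 ^ s + r) div 2 ^ Suc s = (X::nat)"
proof -
  have "b * 2 ^ s + r < 2 ^ Suc s"
    using assms by (cases "b = 0") (auto simp: less_2_cases_iff)
  then show ?thesis by (simp add: add.assoc del: power_Suc)
qed

lemma digit_split_mod:
  "r < 2 ^ s \<Longrightarrow> (X * 2 ^ Suc s + b * 2 ^ s + r) mod 2 ^ s = (r::nat)"
  by (simp add: mod_add_eq[symmetric] add.assoc)

lemma digit_split_qbit:
  assumes "b < 2" "r < 2 ^ s"
  shows "qbit (Suc s) (X * 2 ^ Suc s + b * 2 ^ s + r) = (b::nat)"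
proof -
  have "X * 2 ^ Suc s + b * 2 ^ s + r = (X * 2 + b) * 2 ^ s + r"
    by (simp add: algebra_simps)
  then show ?thesis using assms by (simp add: qbit_def)
qed

lemma bit_div_two_pow: "bit ((x::nat) div 2 ^ s) k = bit x (s + k)"
  by (metis bit_drop_bit_eq comp_apply drop_bit_eq_div)

lemma bit_mod_two_pow: "bit ((x::nat) mod 2 ^ s) k = (k < s \<and> bit x k)"
  by (metis bit_take_bit_iff take_bit_eq_mod)

lemma bit_digit_split:
  assumes "b < 2" "r < 2 ^ s"
  shows "bit (X * 2 ^ Suc s + b * 2 ^ s + r) k =
    (if k < s then bit r k else if k = s then b = 1 else bit (X::nat) (k - Suc s))"
proof -
  let ?y = "X * 2 ^ Suc s + b * 2 ^ s + r"
  consider "k < s" | "k = s" | "k > s" by linarith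
  then show ?thesis
  proof cases
    case 1
    then have "bit (?y mod 2 ^ s) k = bit ?y k" by (simp add: bit_mod_two_pow)
    then show ?thesis using 1 assms by (simp add: digit_split_mod del: power_Suc)
  next
    case 2
    then show ?thesis using digit_split_qbit[OF assms, of X] assms
      by (auto simp: qbit_Suc_eq_bit split: if_splits)
  next
    case 3
    then have "bit (?y div 2 ^ Suc s) (k - Suc s) = bit ?y k"
      by (simp add: bit_div_two_pow del: power_Suc)
    then show ?thesis using 3 assms by (simp add: digit_split_div del: power_Suc)
  qed
qed

lemma less_two_pow_if_same_high_digits:
  assumes "x div 2 ^ Suc s = y div 2 ^ Suc s" "(y::nat) < 2 ^ m" "Suc s \<le> m"
  shows "x < 2 ^ m"
proof -
  have m: "2 ^ m = 2 ^ (m - Suc s) * (2::nat) ^ Suc s"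
    by (metis assms(3) le_add_diff_inverse2 power_add)
  have "y div 2 ^ Suc s < 2 ^ (m - Suc s)"
    using assms(2) unfolding m by (simp add: less_mult_imp_div_less del: power_Suc)
  then have "x div 2 ^ Suc s < 2 ^ (m - Suc s)"
    using assms(1) by simp
  then show ?thesis
    unfolding m by (simp add: div_less_iff_less_mult del: power_Suc)
qed

lemma not_bit_if_less_two_pow: "(x::nat) < 2 ^ n \<Longrightarrow> n \<le> j \<Longrightarrow> \<not> bit x j"
  by (metis bit_take_bit_iff not_less take_bit_nat_eq_self_iff)

(* Bits are numbered from 0 and qubits from 1: bit s of a basis index is qubit s + 1. *)

definition put_bit :: "nat \<Rightarrow> nat \<Rightarrow> nat \<Rightarrow> nat" where
  "put_bit s b x = x div 2 ^ Suc s * 2 ^ Suc s + b * 2 ^ s + x mod 2 ^ s"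

lemma
  assumes "b < 2"
  shows put_bit_div: "put_bit s b x div 2 ^ Suc s = x div 2 ^ Suc s"
    and put_bit_mod: "put_bit s b x mod 2 ^ s = x mod 2 ^ s"
    and qbit_put_bit: "qbit (Suc s) (put_bit s b x) = b"
  using assms unfolding put_bit_def
  by (simp_all only: digit_split_div digit_split_mod digit_split_qbit mod_less_divisor
      zero_less_power zero_less_numeral)

lemma put_bit_qbit: "put_bit s (qbit (Suc s) x) x = x"
  unfolding put_bit_def by (rule digit_split[symmetric])

lemma put_bit_less: "b < 2 \<Longrightarrow> x < 2 ^ m \<Longrightarrow> Suc s \<le> m \<Longrightarrow> put_bit s b x < 2 ^ m"
  using less_two_pow_if_same_high_digits put_bit_div by blast

lemma put_bit_div_two_pow: "b < 2 \<Longrightarrow> put_bit s b x div 2 ^ s = x div 2 ^ Suc s * 2 + b"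
proof -
  have "put_bit s b x = (x div 2 ^ Suc s * 2 + b) * 2 ^ s + x mod 2 ^ s"
    by (simp add: put_bit_def algebra_simps)
  then show ?thesis by simp
qed

lemma put_bit_0_neq_1: "put_bit s 0 x \<noteq> put_bit s 1 x"
  using qbit_put_bit[of 0 s x] qbit_put_bit[of 1 s x] by auto

lemma bit_put_bit: "b < 2 \<Longrightarrow> bit (put_bit s b x) k = (if k = s then b = 1 else bit x k)"
proof -
  assume b: "b < 2"
  then have "bit (put_bit s b x) k = (if k < s then bit (x mod 2 ^ s) k else if k = s then b = 1
      else bit (x div 2 ^ Suc s) (k - Suc s))"
    unfolding put_bit_def by (intro bit_digit_split) auto
  then show ?thesis
    by (auto simp: bit_mod_two_pow bit_div_two_pow simp del: power_Suc)
qed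

lemma same_digits_but_one_iff:
  "(y div 2 ^ Suc s = x div 2 ^ Suc s \<and> y mod 2 ^ s = x mod 2 ^ s) \<longleftrightarrow>
    y = put_bit s 0 x \<or> y = put_bit s 1 x"
proof
  assume "y div 2 ^ Suc s = x div 2 ^ Suc s \<and> y mod 2 ^ s = x mod 2 ^ s"
  then have "y = put_bit s (qbit (Suc s) y) x"
    using put_bit_qbit[of s y] by (simp add: put_bit_def)
  then show "y = put_bit s 0 x \<or> y = put_bit s 1 x"
    using qbit_cases[of "Suc s" y] by auto
next
  assume "y = put_bit s 0 x \<or> y = put_bit s 1 x"
  then show "y div 2 ^ Suc s = x div 2 ^ Suc s \<and> y mod 2 ^ s = x mod 2 ^ s"
    using put_bit_div put_bit_mod by auto
qed

lemma cnot_perm_eq_put_bit: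
  "cnot_perm c (Suc s) x = put_bit s (if qbit c x = 1 then 1 - qbit (Suc s) x else qbit (Suc s) x) x"
proof -
  have x: "x = put_bit s (qbit (Suc s) x) x"
    by (simp add: put_bit_qbit)
  consider "qbit c x \<noteq> 1" | "qbit c x = 1" "qbit (Suc s) x = 0" | "qbit c x = 1" "qbit (Suc s) x = 1"
    by (cases "qbit c x = 1") (use qbit_cases[of "Suc s" x] in auto)
  then show ?thesis
  proof cases
    case 1
    then show ?thesis using x by (simp add: cnot_perm_def)
  next
    case 2
    then have "x + 2 ^ s = put_bit s 1 x"
      using x by (simp add: put_bit_def)
    then show ?thesis using 2 by (simp add: cnot_perm_def)
  next
    case 3
    then have "x = put_bit s 0 x + 2 ^ s"
      using x by (simp add: put_bit_def)
    then show ?thesis using 3 by (simp add: cnot_perm_def)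
  qed
qed

lemma bit_cnot_perm:
  "bit (cnot_perm (Suc c) (Suc t) x) k = (if k = t then bit x t \<noteq> bit x c else bit x k)"
  unfolding cnot_perm_eq_put_bit by (subst bit_put_bit) (auto simp: qbit_Suc_eq_bit)

lemma cnot_perm_less: "x < 2 ^ m \<Longrightarrow> Suc t \<le> m \<Longrightarrow> cnot_perm c (Suc t) x < 2 ^ m"
  unfolding cnot_perm_eq_put_bit by (rule put_bit_less) (auto simp: qbit_def)

lemma cnot_perm_involutive: "c \<noteq> t \<Longrightarrow> cnot_perm (Suc c) (Suc t) (cnot_perm (Suc c) (Suc t) x) = x"
  by (rule bit_eqI) (auto simp: bit_cnot_perm)


lemma index_kron:
  "i < dim_row A * dim_row B \<Longrightarrow> j < dim_col A * dim_col B \<Longrightarrow>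
    kron A B $$ (i, j) = A $$ (i div dim_row B, j div dim_col B) * B $$ (i mod dim_row B, j mod dim_col B)"
  and dim_row_kron [simp]: "dim_row (kron A B) = dim_row A * dim_row B"
  and dim_col_kron [simp]: "dim_col (kron A B) = dim_col A * dim_col B"
  unfolding kron_def by auto

lemma two_pow_split: "Suc s \<le> m \<Longrightarrow> 2 ^ (m - Suc s) * 2 * 2 ^ s = (2::nat) ^ m"
  by (metis le_add_diff_inverse2 mult.assoc power_Suc power_add)

lemma single_gate_carrier:
  "Suc s \<le> m \<Longrightarrow> U \<in> carrier_mat 2 2 \<Longrightarrow> single_gate m (Suc s) U \<in> carrier_mat (2 ^ m) (2 ^ m)"
  unfolding single_gate_def carrier_mat_def using two_pow_split[of s m] by simp

lemma index_single_gate: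
  assumes "Suc s \<le> m" "U \<in> carrier_mat 2 2" "i < 2 ^ m" "j < 2 ^ m"
  shows "single_gate m (Suc s) U $$ (i, j) =
    (if i div 2 ^ Suc s = j div 2 ^ Suc s \<and> i mod 2 ^ s = j mod 2 ^ s
     then U $$ (qbit (Suc s) i, qbit (Suc s) j) else 0)"
proof -
  have m: "2 ^ (m - Suc s) * 2 * 2 ^ s = (2::nat) ^ m"
    using two_pow_split assms(1) by blast
  have high: "x div 2 ^ s div 2 = x div 2 ^ Suc s" for x :: nat
    by (simp add: div_mult2_eq power_Suc2 del: power_Suc)
  have low_less: "x div 2 ^ s < 2 ^ (m - Suc s) * 2" if "x < 2 ^ m" for x :: nat
    using that m by (metis less_mult_imp_div_less)
  have high_less: "x div 2 ^ Suc s < 2 ^ (m - Suc s)" if "x < 2 ^ m" for x :: nat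
    using low_less[OF that] high[of x] by linarith
  let ?A = "kron (1\<^sub>m (2 ^ (m - Suc s))) U"
  have "single_gate m (Suc s) U $$ (i, j) =
      ?A $$ (i div 2 ^ s, j div 2 ^ s) * 1\<^sub>m (2 ^ s) $$ (i mod 2 ^ s, j mod 2 ^ s)"
    unfolding single_gate_def using assms m by (subst index_kron) auto
  also have "?A $$ (i div 2 ^ s, j div 2 ^ s) =
      1\<^sub>m (2 ^ (m - Suc s)) $$ (i div 2 ^ Suc s, j div 2 ^ Suc s) * U $$ (qbit (Suc s) i, qbit (Suc s) j)"
    using assms low_less[of i] low_less[of j] by (subst index_kron) (auto simp: high qbit_def)
  finally show ?thesis
    using assms high_less[of i] high_less[of j] by simp
qed

lemma sum_atLeastLessThan_single:
  "(a::nat) < n \<Longrightarrow> (\<And>k. k < n \<Longrightarrow> k \<noteq> a \<Longrightarrow> f k = 0) \<Longrightarrow>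
    (\<Sum>k\<in>{0..<n}. f k) = (f a :: 'a::comm_monoid_add)"
  by (subst sum.mono_neutral_right[of "{0..<n}" "{a}"]) auto

lemma sum_atLeastLessThan_pair:
  "(a::nat) < n \<Longrightarrow> b < n \<Longrightarrow> a \<noteq> b \<Longrightarrow> (\<And>k. k < n \<Longrightarrow> k \<noteq> a \<Longrightarrow> k \<noteq> b \<Longrightarrow> f k = 0) \<Longrightarrow>
    (\<Sum>k\<in>{0..<n}. f k) = (f a + f b :: 'a::comm_monoid_add)"
  by (subst sum.mono_neutral_right[of "{0..<n}" "{a, b}"]) auto

lemma index_mult_mat_sum:
  "A \<in> carrier_mat n1 n2 \<Longrightarrow> B \<in> carrier_mat n2 n3 \<Longrightarrow> i < n1 \<Longrightarrow> j < n3 \<Longrightarrow>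
    (A * B) $$ (i, j) = (\<Sum>k\<in>{0..<n2}. A $$ (i, k) * B $$ (k, j))"
  by (simp add: scalar_prod_def)

lemma index_single_gate_mult:
  assumes "Suc s \<le> m" "U \<in> carrier_mat 2 2" "B \<in> carrier_mat (2 ^ m) c" "i < 2 ^ m" "j < c"
  shows "(single_gate m (Suc s) U * B) $$ (i, j) =
    U $$ (qbit (Suc s) i, 0) * B $$ (put_bit s 0 i, j) + U $$ (qbit (Suc s) i, 1) * B $$ (put_bit s 1 i, j)"
proof -
  have "(single_gate m (Suc s) U * B) $$ (i, j) =
      (\<Sum>k\<in>{0..<2 ^ m}. single_gate m (Suc s) U $$ (i, k) * B $$ (k, j))"
    using assms by (intro index_mult_mat_sum[OF single_gate_carrier]) auto
  also have "\<dots> = single_gate m (Suc s) U $$ (i, put_bit s 0 i) * B $$ (put_bit s 0 i, j) +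
      single_gate m (Suc s) U $$ (i, put_bit s 1 i) * B $$ (put_bit s 1 i, j)"
  proof (rule sum_atLeastLessThan_pair)
    fix k assume "k < 2 ^ m" "k \<noteq> put_bit s 0 i" "k \<noteq> put_bit s 1 i"
    then show "single_gate m (Suc s) U $$ (i, k) * B $$ (k, j) = 0"
      using assms same_digits_but_one_iff[of k s i] by (auto simp: index_single_gate)
  qed (use assms put_bit_less put_bit_0_neq_1 in auto)
  also have "\<dots> = U $$ (qbit (Suc s) i, 0) * B $$ (put_bit s 0 i, j) + U $$ (qbit (Suc s) i, 1) * B $$ (put_bit s 1 i, j)"
  proof -
    have "single_gate m (Suc s) U $$ (i, put_bit s c i) = U $$ (qbit (Suc s) i, c)" if "c < 2" for c
      using assms put_bit_less[OF that assms(4,1)] put_bit_div[OF that] put_bit_mod[OF that] qbit_put_bit[OF that]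
      by (simp add: index_single_gate del: power_Suc)
    then show ?thesis by simp
  qed
  finally show ?thesis .
qed

definition mono_mat :: "nat \<Rightarrow> (nat \<Rightarrow> nat) \<Rightarrow> (nat \<Rightarrow> complex) \<Rightarrow> complex mat" where
  "mono_mat n p d = mat n n (\<lambda>(i, j). if i = p j then d j else 0)"

abbreviation diagonal_mat :: "nat \<Rightarrow> (nat \<Rightarrow> complex) \<Rightarrow> complex mat" where
  "diagonal_mat n d \<equiv> mono_mat n (\<lambda>x. x) d"

lemma mono_mat_carrier [simp]: "mono_mat n p d \<in> carrier_mat n n"
  and dim_row_mono_mat [simp]: "dim_row (mono_mat n p d) = n"
  and dim_col_mono_mat [simp]: "dim_col (mono_mat n p d) = n"
  by (simp_all add: mono_mat_def)

lemma index_mono_mat: "i < n \<Longrightarrow> j < n \<Longrightarrow> mono_mat n p d $$ (i, j) = (if i = p j then d j else 0)"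
  by (simp add: mono_mat_def)

lemma mono_mat_cong:
  "(\<And>j. j < n \<Longrightarrow> p j = p' j) \<Longrightarrow> (\<And>j. j < n \<Longrightarrow> d j = d' j) \<Longrightarrow> mono_mat n p d = mono_mat n p' d'"
  unfolding mono_mat_def by (rule cong_mat) auto

lemma one_mat_eq_diagonal_mat: "1\<^sub>m n = diagonal_mat n (\<lambda>_. 1)"
  by (rule eq_matI) (auto simp: mono_mat_def)

lemma mono_mat_mult:
  assumes "\<And>j. j < n \<Longrightarrow> q j < n"
  shows "mono_mat n p d * mono_mat n q e = mono_mat n (p \<circ> q) (\<lambda>j. d (q j) * e j)"
proof (rule eq_matI)
  fix i j assume "i < dim_row (mono_mat n (p \<circ> q) (\<lambda>j. d (q j) * e j))"
    "j < dim_col (mono_mat n (p \<circ> q) (\<lambda>j. d (q j) * e j))"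
  then have ij: "i < n" "j < n" by auto
  have "(mono_mat n p d * mono_mat n q e) $$ (i, j) =
      (\<Sum>k\<in>{0..<n}. mono_mat n p d $$ (i, k) * mono_mat n q e $$ (k, j))"
    using ij by (intro index_mult_mat_sum) auto
  also have "\<dots> = mono_mat n p d $$ (i, q j) * mono_mat n q e $$ (q j, j)"
    using ij assms by (intro sum_atLeastLessThan_single) (auto simp: index_mono_mat)
  finally show "(mono_mat n p d * mono_mat n q e) $$ (i, j) = mono_mat n (p \<circ> q) (\<lambda>j. d (q j) * e j) $$ (i, j)"
    using ij assms by (simp add: index_mono_mat)
qed auto

lemma index_mult_mono_mat:
  assumes "B \<in> carrier_mat r n" "i < r" "j < n" "p j < n"
  shows "(B * mono_mat n p d) $$ (i, j) = B $$ (i, p j) * d j"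
proof -
  have "(B * mono_mat n p d) $$ (i, j) = (\<Sum>k\<in>{0..<n}. B $$ (i, k) * mono_mat n p d $$ (k, j))"
    using assms by (intro index_mult_mat_sum) auto
  also have "\<dots> = B $$ (i, p j) * mono_mat n p d $$ (p j, j)"
    using assms by (intro sum_atLeastLessThan_single) (auto simp: index_mono_mat)
  finally show ?thesis using assms by (simp add: index_mono_mat)
qed

lemma index_mono_mat_mult:
  assumes "B \<in> carrier_mat n c" "i < n" "j < c" "p i < n" and involutive: "\<And>k. k < n \<Longrightarrow> p (p k) = k"
  shows "(mono_mat n p d * B) $$ (i, j) = d (p i) * B $$ (p i, j)"
proof -
  have "(mono_mat n p d * B) $$ (i, j) = (\<Sum>k\<in>{0..<n}. mono_mat n p d $$ (i, k) * B $$ (k, j))"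
    using assms by (intro index_mult_mat_sum) auto
  also have "\<dots> = mono_mat n p d $$ (i, p i) * B $$ (p i, j)"
    using assms by (intro sum_atLeastLessThan_single) (auto simp: index_mono_mat)
  finally show ?thesis using assms by (simp add: index_mono_mat)
qed

lemma cnot_gate_eq_mono_mat: "cnot_gate m c t = mono_mat (2 ^ m) (cnot_perm c t) (\<lambda>_. 1)"
  unfolding cnot_gate_def mono_mat_def by (rule cong_mat) auto

definition diag2 :: "complex \<Rightarrow> complex \<Rightarrow> complex mat" where
  "diag2 a b = mat 2 2 (\<lambda>(i, j). if i = j then (if i = 0 then a else b) else 0)"

lemma diag2_carrier [simp]: "diag2 a b \<in> carrier_mat 2 2"
  by (simp add: diag2_def)

lemma single_gate_diag2:
  assumes "Suc s \<le> m"
  shows "single_gate m (Suc s) (diag2 a b) = diagonal_mat (2 ^ m) (\<lambda>x. if qbit (Suc s) x = 1 then b else a)"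
proof (rule eq_matI)
  fix i j assume "i < dim_row (diagonal_mat (2 ^ m) (\<lambda>x. if qbit (Suc s) x = 1 then b else a))"
    "j < dim_col (diagonal_mat (2 ^ m) (\<lambda>x. if qbit (Suc s) x = 1 then b else a))"
  then have ij: "i < 2 ^ m" "j < 2 ^ m" by auto
  have "i = j" if "i div 2 ^ Suc s = j div 2 ^ Suc s" "i mod 2 ^ s = j mod 2 ^ s" "qbit (Suc s) i = qbit (Suc s) j"
    using that digit_split[of i s] digit_split[of j s] by metis
  then show "single_gate m (Suc s) (diag2 a b) $$ (i, j) =
      diagonal_mat (2 ^ m) (\<lambda>x. if qbit (Suc s) x = 1 then b else a) $$ (i, j)"
    using ij assms qbit_less_2[of "Suc s" i] qbit_less_2[of "Suc s" j]
    by (auto simp: index_single_gate index_mono_mat diag2_def less_2_cases_iff)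
qed (use single_gate_carrier[OF assms diag2_carrier] in auto)


lemma transpose_kron: "transpose_mat (kron A B) = kron (transpose_mat A) (transpose_mat B)"
proof (rule eq_matI)
  fix i j assume "i < dim_row (kron (transpose_mat A) (transpose_mat B))"
    "j < dim_col (kron (transpose_mat A) (transpose_mat B))"
  then have ij: "i < dim_col A * dim_col B" "j < dim_row A * dim_row B"
    by simp_all
  then have "0 < dim_col B" "0 < dim_row B"
    by (metis mult_0_right not_less0 neq0_conv)+
  with ij show "transpose_mat (kron A B) $$ (i, j) = kron (transpose_mat A) (transpose_mat B) $$ (i, j)"
    by (simp add: index_kron less_mult_imp_div_less)
qed auto

lemma transpose_single_gate: "transpose_mat (single_gate m t U) = single_gate m t (transpose_mat U)"
  by (simp add: single_gate_def transpose_kron)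

lemma transpose_mono_mat:
  assumes "\<And>j. j < n \<Longrightarrow> p j < n" "\<And>j. j < n \<Longrightarrow> p (p j) = j"
  shows "transpose_mat (mono_mat n p d) = mono_mat n p (\<lambda>j. d (p j))"
  by (rule eq_matI) (auto simp: index_mono_mat assms)


definition elementary_circuit :: "nat \<Rightarrow> complex mat list \<Rightarrow> bool" where
  "elementary_circuit m gs \<longleftrightarrow> (\<forall>G\<in>set gs. elementary_gate m G)"

lemma elementary_circuit_simps [simp]:
  "elementary_circuit m []"
  "elementary_circuit m (G # gs) \<longleftrightarrow> elementary_gate m G \<and> elementary_circuit m gs"
  "elementary_circuit m (gs @ hs) \<longleftrightarrow> elementary_circuit m gs \<and> elementary_circuit m hs"
  by (auto simp: elementary_circuit_def)

lemma circuit_prod_simps [simp]: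
  "circuit_prod m [] = 1\<^sub>m (2 ^ m)"
  "circuit_prod m (G # gs) = G * circuit_prod m gs"
  by (simp_all add: circuit_prod_def)

lemma unitary2_carrier: "unitary2 U \<Longrightarrow> U \<in> carrier_mat 2 2"
  by (simp add: unitary2_def)

lemma elementary_gate_carrier:
  assumes "elementary_gate m G"
  shows "G \<in> carrier_mat (2 ^ m) (2 ^ m)"
proof (cases "\<exists>c t. G = cnot_gate m c t")
  case True
  then show ?thesis by (auto simp: cnot_gate_eq_mono_mat)
next
  case False
  then obtain t U where "1 \<le> t" "t \<le> m" "unitary2 U" "G = single_gate m t U"
    using assms unfolding elementary_gate_def by blast
  moreover obtain s where "t = Suc s"
    using \<open>1 \<le> t\<close> by (cases t) auto
  ultimately show ?thesis
    using single_gate_carrier unitary2_carrier by blast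
qed

lemma circuit_prod_carrier:
  "elementary_circuit m gs \<Longrightarrow> circuit_prod m gs \<in> carrier_mat (2 ^ m) (2 ^ m)"
  by (induction gs) (auto intro: mult_carrier_mat[OF elementary_gate_carrier])

lemma circuit_prod_append:
  "elementary_circuit m gs \<Longrightarrow> elementary_circuit m hs \<Longrightarrow>
    circuit_prod m (gs @ hs) = circuit_prod m gs * circuit_prod m hs"
proof (induction gs)
  case Nil
  then show ?case using circuit_prod_carrier[of m hs] by simp
next
  case (Cons G gs)
  then show ?case
    using elementary_gate_carrier[of m G] circuit_prod_carrier[of m gs] circuit_prod_carrier[of m hs]
    by (simp add: assoc_mult_mat[of G _ _ "circuit_prod m gs" _ "circuit_prod m hs"])
qed

lemma elementary_gate_single_gate:
  "1 \<le> t \<Longrightarrow> t \<le> m \<Longrightarrow> unitary2 U \<Longrightarrow> elementary_gate m (single_gate m t U)"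
  unfolding elementary_gate_def by blast

lemma elementary_gate_cnot:
  "1 \<le> c \<Longrightarrow> c \<le> m \<Longrightarrow> 1 \<le> t \<Longrightarrow> t \<le> m \<Longrightarrow> c \<noteq> t \<Longrightarrow> elementary_gate m (cnot_gate m c t)"
  unfolding elementary_gate_def by blast

lemma unitary2_diag2: "cnj a * a = 1 \<Longrightarrow> cnj b * b = 1 \<Longrightarrow> unitary2 (diag2 a b)"
  unfolding unitary2_def
  by (auto simp: ctrans_def diag2_def scalar_prod_def numeral_2_eq_2 less_Suc_eq mult.commute intro!: eq_matI)

lemma cnj_cis_mult_cis: "cnj (cis x) * cis x = 1"
  by (simp add: cis_cnj cis_mult)


subsection \<open>Phase circuits\<close>

definition phase_gate :: "nat \<Rightarrow> nat \<Rightarrow> real \<Rightarrow> complex mat" where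
  "phase_gate m t \<alpha> = single_gate m t (diag2 1 (cis \<alpha>))"

lemma phase_gate_eq_diagonal_mat:
  assumes "Suc s \<le> m"
  shows "phase_gate m (Suc s) \<alpha> = diagonal_mat (2 ^ m) (\<lambda>x. cis (\<alpha> * real (qbit (Suc s) x)))"
proof -
  have "(if qbit (Suc s) x = 1 then cis \<alpha> else 1) = cis (\<alpha> * real (qbit (Suc s) x))" for x
    using qbit_cases[of "Suc s" x] by auto
  then show ?thesis
    unfolding phase_gate_def using assms by (simp add: single_gate_diag2)
qed

lemma elementary_gate_phase_gate: "1 \<le> t \<Longrightarrow> t \<le> m \<Longrightarrow> elementary_gate m (phase_gate m t \<alpha>)"
  unfolding phase_gate_def by (intro elementary_gate_single_gate unitary2_diag2 cnj_cis_mult_cis) auto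

text \<open>Since \<open>2 b\<^sub>c b\<^sub>t = b\<^sub>c + b\<^sub>t - (b\<^sub>c \<oplus> b\<^sub>t)\<close>, a controlled phase is two phase gates and a phase
  on the target after it has been XOR-ed with the control.\<close>

definition controlled_phase :: "nat \<Rightarrow> nat \<Rightarrow> nat \<Rightarrow> real \<Rightarrow> complex mat list" where
  "controlled_phase m c t \<phi> =
    [phase_gate m c (\<phi> / 2), phase_gate m t (\<phi> / 2), cnot_gate m c t, phase_gate m t (- \<phi> / 2), cnot_gate m c t]"

lemma circuit_prod_controlled_phase:
  assumes "Suc c \<le> m" "Suc t \<le> m" "c \<noteq> t"
  shows "circuit_prod m (controlled_phase m (Suc c) (Suc t) \<phi>) =
    diagonal_mat (2 ^ m) (\<lambda>x. cis (\<phi> * real (qbit (Suc c) x) * real (qbit (Suc t) x)))"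
proof -
  let ?X = "cnot_perm (Suc c) (Suc t)"
  have less: "x < 2 ^ m \<Longrightarrow> ?X x < 2 ^ m" for x
    using assms cnot_perm_less by blast
  show ?thesis
    unfolding controlled_phase_def using assms
    by (simp add: phase_gate_eq_diagonal_mat cnot_gate_eq_mono_mat one_mat_eq_diagonal_mat mono_mat_mult less,
        intro mono_mat_cong)
      (auto simp: cnot_perm_involutive qbit_Suc_eq_bit bit_cnot_perm cis_mult simp flip: cis_inverse)
qed

lemma elementary_circuit_controlled_phase:
  "1 \<le> c \<Longrightarrow> c \<le> m \<Longrightarrow> 1 \<le> t \<Longrightarrow> t \<le> m \<Longrightarrow> c \<noteq> t \<Longrightarrow>
    elementary_circuit m (controlled_phase m c t \<phi>)"
  unfolding controlled_phase_def by (simp add: elementary_gate_phase_gate elementary_gate_cnot)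

lemma diagonal_mat_mult: "diagonal_mat n d * diagonal_mat n e = diagonal_mat n (\<lambda>x. d x * e x)"
  by (simp add: mono_mat_mult comp_def)

fun controlled_phase_ramp :: "nat \<Rightarrow> nat \<Rightarrow> real \<Rightarrow> nat \<Rightarrow> complex mat list" where
  "controlled_phase_ramp m c \<phi> 0 = []"
| "controlled_phase_ramp m c \<phi> (Suc k) =
    controlled_phase m c (Suc k) (\<phi> * 2 ^ k) @ controlled_phase_ramp m c \<phi> k"

lemma elementary_circuit_controlled_phase_ramp:
  "Suc c \<le> m \<Longrightarrow> k \<le> c \<Longrightarrow> elementary_circuit m (controlled_phase_ramp m (Suc c) \<phi> k)"
  by (induction k) (auto intro: elementary_circuit_controlled_phase)

lemma circuit_prod_controlled_phase_ramp:
  "Suc c \<le> m \<Longrightarrow> k \<le> c \<Longrightarrow> circuit_prod m (controlled_phase_ramp m (Suc c) \<phi> k) =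
    diagonal_mat (2 ^ m) (\<lambda>x. cis (\<phi> * real (qbit (Suc c) x) * real (x mod 2 ^ k)))"
proof (induction k)
  case 0
  then show ?case by (simp add: one_mat_eq_diagonal_mat)
next
  case (Suc k)
  then have "circuit_prod m (controlled_phase_ramp m (Suc c) \<phi> (Suc k)) =
      circuit_prod m (controlled_phase m (Suc c) (Suc k) (\<phi> * 2 ^ k)) *
      circuit_prod m (controlled_phase_ramp m (Suc c) \<phi> k)"
    by (simp add: circuit_prod_append elementary_circuit_controlled_phase elementary_circuit_controlled_phase_ramp)
  also have "\<dots> = diagonal_mat (2 ^ m) (\<lambda>x. cis (\<phi> * real (qbit (Suc c) x) * real (x mod 2 ^ Suc k)))"
    using Suc by (simp add: circuit_prod_controlled_phase diagonal_mat_mult cis_mult mod_two_pow_Suc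
        algebra_simps del: power_Suc)
  finally show ?case .
qed

lemma length_controlled_phase_ramp: "length (controlled_phase_ramp m c \<phi> k) = 5 * k"
  by (induction k) (auto simp: controlled_phase_def)

fun phase_ramp :: "nat \<Rightarrow> real \<Rightarrow> nat \<Rightarrow> complex mat list" where
  "phase_ramp m \<alpha> 0 = []"
| "phase_ramp m \<alpha> (Suc k) = phase_gate m (Suc k) (\<alpha> * 2 ^ k) # phase_ramp m \<alpha> k"

lemma elementary_circuit_phase_ramp: "k \<le> m \<Longrightarrow> elementary_circuit m (phase_ramp m \<alpha> k)"
  by (induction k) (auto intro: elementary_gate_phase_gate)

lemma circuit_prod_phase_ramp:
  "k \<le> m \<Longrightarrow> circuit_prod m (phase_ramp m \<alpha> k) = diagonal_mat (2 ^ m) (\<lambda>x. cis (\<alpha> * real (x mod 2 ^ k)))"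
  by (induction k)
    (simp_all add: one_mat_eq_diagonal_mat phase_gate_eq_diagonal_mat diagonal_mat_mult cis_mult
      mod_two_pow_Suc algebra_simps del: power_Suc)

lemma length_phase_ramp: "length (phase_ramp m \<alpha> k) = k"
  by (induction k) auto


definition swap_circuit :: "nat \<Rightarrow> nat \<Rightarrow> nat \<Rightarrow> complex mat list" where
  "swap_circuit m a b = [cnot_gate m a b, cnot_gate m b a, cnot_gate m a b]"

primrec rotate_bits_circuit :: "nat \<Rightarrow> nat \<Rightarrow> complex mat list" where
  "rotate_bits_circuit m 0 = []"
| "rotate_bits_circuit m (Suc s) = swap_circuit m (Suc s) (Suc (Suc s)) @ rotate_bits_circuit m s"

definition rotate_bits :: "nat \<Rightarrow> nat \<Rightarrow> nat" where
  "rotate_bits s j = j div 2 ^ Suc s * 2 ^ Suc s + j mod 2 * 2 ^ s + j mod 2 ^ Suc s div 2"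

lemma low_digits_div_2_less: "(j mod 2 ^ Suc s) div 2 < (2::nat) ^ s"
  by (metis less_mult_imp_div_less mod_less_divisor pos2 power_Suc2 zero_less_power)

lemma rotate_bits_div: "rotate_bits s j div 2 ^ Suc s = j div 2 ^ Suc s"
  unfolding rotate_bits_def by (rule digit_split_div) (simp_all add: low_digits_div_2_less del: power_Suc)

lemma rotate_bits_less: "j < 2 ^ m \<Longrightarrow> Suc s \<le> m \<Longrightarrow> rotate_bits s j < 2 ^ m"
  using less_two_pow_if_same_high_digits rotate_bits_div by metis

lemma
  shows rotate_bits_div_two_pow: "rotate_bits s j div 2 ^ s = j div 2 ^ Suc s * 2 + j mod 2"
    and rotate_bits_mod_two_pow: "rotate_bits s j mod 2 ^ s = j mod 2 ^ Suc s div 2"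
proof -
  have "rotate_bits s j = (j div 2 ^ Suc s * 2 + j mod 2) * 2 ^ s + j mod 2 ^ Suc s div 2"
    by (simp add: rotate_bits_def algebra_simps)
  then show "rotate_bits s j div 2 ^ s = j div 2 ^ Suc s * 2 + j mod 2"
    "rotate_bits s j mod 2 ^ s = j mod 2 ^ Suc s div 2"
    using low_digits_div_2_less[of j s] by simp_all
qed

lemma bit_rotate_bits:
  "bit (rotate_bits s j) k = (if k < s then bit j (Suc k) else if k = s then bit j 0 else bit j k)"
proof -
  have "bit (rotate_bits s j) k = (if k < s then bit (j mod 2 ^ Suc s div 2) k else if k = s then j mod 2 = 1
      else bit (j div 2 ^ Suc s) (k - Suc s))"
    unfolding rotate_bits_def by (rule bit_digit_split) (simp_all add: low_digits_div_2_less del: power_Suc)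
  moreover have "bit (j mod 2 ^ Suc s div 2) k = (k < s \<and> bit j (Suc k))"
    using bit_div_two_pow[of "j mod 2 ^ Suc s" 1 k] by (simp add: bit_mod_two_pow del: power_Suc)
  moreover have "bit (j div 2 ^ Suc s) (k - Suc s) = bit j k" if "s < k"
    using that bit_div_two_pow[of j "Suc s" "k - Suc s"] by (simp del: power_Suc)
  ultimately show ?thesis
    by (simp add: bit_0 odd_iff_mod_2_eq_one)
qed

lemma elementary_circuit_rotate_bits_circuit: "s < m \<Longrightarrow> elementary_circuit m (rotate_bits_circuit m s)"
  by (induction s) (auto simp: swap_circuit_def intro: elementary_gate_cnot)

lemma circuit_prod_rotate_bits_circuit:
  "s < m \<Longrightarrow> circuit_prod m (rotate_bits_circuit m s) = mono_mat (2 ^ m) (rotate_bits s) (\<lambda>_. 1)"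
proof (induction s)
  case 0
  have "rotate_bits 0 j = j" for j
    by (simp add: rotate_bits_def)
  then show ?case by (simp add: one_mat_eq_diagonal_mat)
next
  case (Suc s)
  let ?X = "\<lambda>a b. cnot_perm (Suc a) (Suc b)"
  have less: "j < 2 ^ m \<Longrightarrow> ?X a b j < 2 ^ m" if "Suc b \<le> m" for a b j
    using that cnot_perm_less by blast
  have "circuit_prod m (rotate_bits_circuit m (Suc s)) =
      circuit_prod m (swap_circuit m (Suc s) (Suc (Suc s))) * circuit_prod m (rotate_bits_circuit m s)"
    unfolding rotate_bits_circuit.simps using Suc.prems
    by (intro circuit_prod_append) (auto simp: swap_circuit_def elementary_gate_cnot elementary_circuit_rotate_bits_circuit)
  also have "\<dots> = mono_mat (2 ^ m) (\<lambda>j. ?X s (Suc s) (?X (Suc s) s (?X s (Suc s) (rotate_bits s j)))) (\<lambda>_. 1)"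
    using Suc by (simp add: swap_circuit_def cnot_gate_eq_mono_mat one_mat_eq_diagonal_mat mono_mat_mult
        less rotate_bits_less comp_def)
  also have "\<dots> = mono_mat (2 ^ m) (rotate_bits (Suc s)) (\<lambda>_. 1)"
    by (intro mono_mat_cong bit_eqI) (auto simp: bit_cnot_perm bit_rotate_bits)
  finally show ?case .
qed

lemma length_rotate_bits_circuit: "length (rotate_bits_circuit m s) = 3 * s"
  by (induction s) (auto simp: swap_circuit_def)


subsection \<open>The quantum Fourier transform\<close>

definition inv_sqrt2 :: complex where
  "inv_sqrt2 = 1 / complex_of_real (sqrt 2)"

lemma inv_sqrt2_mult_self: "inv_sqrt2 * inv_sqrt2 = 1 / 2"
  by (simp add: inv_sqrt2_def flip: of_real_mult)

definition hadamard :: "complex mat" where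
  "hadamard = mat 2 2 (\<lambda>(i, j). if i = 1 \<and> j = 1 then - inv_sqrt2 else inv_sqrt2)"

lemma hadamard_carrier [simp]: "hadamard \<in> carrier_mat 2 2"
  by (simp add: hadamard_def)

lemma cis_minus_pi: "cis (- pi) = - 1"
  by (simp add: complex_eq_iff)

lemma index_hadamard: "b < 2 \<Longrightarrow> c < 2 \<Longrightarrow> hadamard $$ (b, c) = cis (- pi * real b * real c) * inv_sqrt2"
  using cis_minus_pi by (auto simp: hadamard_def less_2_cases_iff)

lemma unitary2_hadamard: "unitary2 hadamard"
  using inv_sqrt2_mult_self unfolding unitary2_def
  by (auto simp: inv_sqrt2_def hadamard_def ctrans_def scalar_prod_def numeral_2_eq_2 less_Suc_eq intro!: eq_matI)

lemma transpose_hadamard: "transpose_mat hadamard = hadamard"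
  by (rule eq_matI) (auto simp: hadamard_def)


definition dft_coeff :: "nat \<Rightarrow> nat \<Rightarrow> nat \<Rightarrow> complex" where
  "dft_coeff m x y = cis (- 2 * pi * real x * real y / 2 ^ m) / complex_of_real (sqrt (2 ^ m))"

text \<open>The DFT of size \<open>2\<^sup>k\<close> on the \<open>k\<close> least significant of \<open>m\<close> qubits.\<close>

definition block_dft_mat :: "nat \<Rightarrow> nat \<Rightarrow> complex mat" where
  "block_dft_mat m k = mat (2 ^ m) (2 ^ m)
    (\<lambda>(i, j). if i div 2 ^ k = j div 2 ^ k then dft_coeff k (i mod 2 ^ k) (j mod 2 ^ k) else 0)"

lemma block_dft_mat_carrier [simp]: "block_dft_mat m k \<in> carrier_mat (2 ^ m) (2 ^ m)"
  and dim_row_block_dft_mat [simp]: "dim_row (block_dft_mat m k) = 2 ^ m"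
  and dim_col_block_dft_mat [simp]: "dim_col (block_dft_mat m k) = 2 ^ m"
  by (simp_all add: block_dft_mat_def)

lemma index_block_dft_mat:
  "i < 2 ^ m \<Longrightarrow> j < 2 ^ m \<Longrightarrow> block_dft_mat m k $$ (i, j) =
    (if i div 2 ^ k = j div 2 ^ k then dft_coeff k (i mod 2 ^ k) (j mod 2 ^ k) else 0)"
  by (simp add: block_dft_mat_def)

lemma block_dft_mat_0: "block_dft_mat m 0 = 1\<^sub>m (2 ^ m)"
  by (rule eq_matI) (auto simp: block_dft_mat_def dft_coeff_def)

lemma cis_diff_2pi_nat: "cis (a - 2 * pi * real n) = cis a"
  by (simp add: cis_divide[symmetric] cis_multiple_2pi)

text \<open>The radix-2 step of the DFT: split off the top bit of the row index and the lowest bit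
  of the column index.\<close>

lemma dft_coeff_Suc:
  assumes "b < 2" "y\<^sub>0 < 2"
  shows "dft_coeff (Suc k) (b * 2 ^ k + x) (2 * y + y\<^sub>0) =
    hadamard $$ (b, y\<^sub>0) * cis (- 2 * pi / 2 ^ Suc k * real y\<^sub>0 * real x) * dft_coeff k x y"
proof -
  have arg: "- 2 * pi * real (b * 2 ^ k + x) * real (2 * y + y\<^sub>0) / 2 ^ Suc k =
      (- pi * real b * real y\<^sub>0 + (- 2 * pi / 2 ^ Suc k * real y\<^sub>0 * real x) + (- 2 * pi * real x * real y / 2 ^ k))
      - 2 * pi * real (b * y)"
    by (simp add: field_simps)
  have norm: "complex_of_real (sqrt (2 ^ Suc k)) = complex_of_real (sqrt 2) * complex_of_real (sqrt (2 ^ k))"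
    by (simp add: real_sqrt_mult)
  show ?thesis
    unfolding dft_coeff_def arg cis_diff_2pi_nat index_hadamard[OF assms] norm inv_sqrt2_def
    by (simp add: cis_mult)
qed

lemma index_block_dft_mat_put_bit_rotate_bits:
  assumes "Suc k \<le> m" "i < 2 ^ m" "j < 2 ^ m" "c < 2"
  shows "block_dft_mat m k $$ (put_bit k c i, rotate_bits k j) =
    (if i div 2 ^ Suc k = j div 2 ^ Suc k \<and> c = j mod 2 then dft_coeff k (i mod 2 ^ k) (j mod 2 ^ Suc k div 2) else 0)"
proof -
  have "block_dft_mat m k $$ (put_bit k c i, rotate_bits k j) =
      (if i div 2 ^ Suc k * 2 + c = j div 2 ^ Suc k * 2 + j mod 2
       then dft_coeff k (i mod 2 ^ k) (j mod 2 ^ Suc k div 2) else 0)"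
    using assms put_bit_less[OF assms(4,2,1)] rotate_bits_less[OF assms(3,1)]
    by (simp add: index_block_dft_mat put_bit_div_two_pow put_bit_mod rotate_bits_div_two_pow
        rotate_bits_mod_two_pow del: power_Suc)
  moreover have "(I * 2 + c = J * 2 + d) = (I = J \<and> c = d)" if "d < 2" for I J d :: nat
    using assms(4) that by presburger
  ultimately show ?thesis
    by (simp del: power_Suc)
qed

lemma index_block_dft_mat_Suc:
  assumes "Suc k \<le> m" "i < 2 ^ m" "j < 2 ^ m"
  shows "block_dft_mat m (Suc k) $$ (i, j) =
    hadamard $$ (qbit (Suc k) i, 0) * block_dft_mat m k $$ (put_bit k 0 i, rotate_bits k j) +
    hadamard $$ (qbit (Suc k) i, 1) *
      (cis (- 2 * pi / 2 ^ Suc k * real (i mod 2 ^ k)) * block_dft_mat m k $$ (put_bit k 1 i, rotate_bits k j))"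
proof -
  define b where "b = qbit (Suc k) i"
  define x where "x = i mod 2 ^ k"
  define y\<^sub>0 where "y\<^sub>0 = j mod 2"
  define y where "y = j mod 2 ^ Suc k div 2"
  have b: "b < 2" and y\<^sub>0: "y\<^sub>0 < 2"
    by (simp_all add: b_def y\<^sub>0_def qbit_less_2)
  have "j mod 2 ^ Suc k mod 2 = y\<^sub>0"
    unfolding y\<^sub>0_def by (rule mod_mod_cancel) simp
  then have j_low: "j mod 2 ^ Suc k = 2 * y + y\<^sub>0"
    unfolding y_def using div_mult_mod_eq[of "j mod 2 ^ Suc k" 2] by linarith
  have "block_dft_mat m (Suc k) $$ (i, j) =
      (if i div 2 ^ Suc k = j div 2 ^ Suc k then dft_coeff (Suc k) (b * 2 ^ k + x) (2 * y + y\<^sub>0) else 0)"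
    using assms unfolding b_def x_def j_low[symmetric]
    by (simp add: index_block_dft_mat mod_two_pow_Suc del: power_Suc)
  also have "\<dots> = (if i div 2 ^ Suc k = j div 2 ^ Suc k
      then hadamard $$ (b, y\<^sub>0) * cis (- 2 * pi / 2 ^ Suc k * real y\<^sub>0 * real x) * dft_coeff k x y else 0)"
    using dft_coeff_Suc[OF b y\<^sub>0] by simp
  also have "\<dots> = hadamard $$ (b, 0) * block_dft_mat m k $$ (put_bit k 0 i, rotate_bits k j) +
      hadamard $$ (b, 1) * (cis (- 2 * pi / 2 ^ Suc k * real x) * block_dft_mat m k $$ (put_bit k 1 i, rotate_bits k j))"
    using assms y\<^sub>0 by (auto simp: index_block_dft_mat_put_bit_rotate_bits x_def y_def y\<^sub>0_def less_2_cases_iff)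
  finally show ?thesis
    by (simp add: b_def x_def)
qed

primrec qft_circuit :: "nat \<Rightarrow> nat \<Rightarrow> complex mat list" where
  "qft_circuit m 0 = []"
| "qft_circuit m (Suc k) = single_gate m (Suc k) hadamard #
    controlled_phase_ramp m (Suc k) (- 2 * pi / 2 ^ Suc k) k @ qft_circuit m k @ rotate_bits_circuit m k"

lemma elementary_circuit_qft_circuit: "k \<le> m \<Longrightarrow> elementary_circuit m (qft_circuit m k)"
  by (induction k)
    (auto intro: elementary_gate_single_gate unitary2_hadamard elementary_circuit_controlled_phase_ramp
      elementary_circuit_rotate_bits_circuit)

lemma length_qft_circuit: "length (qft_circuit m k) \<le> 4 * k ^ 2"
proof (induction k)
  case (Suc k)
  have "length (qft_circuit m (Suc k)) = 1 + 5 * k + length (qft_circuit m k) + 3 * k"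
    by (simp add: length_controlled_phase_ramp length_rotate_bits_circuit)
  also have "\<dots> \<le> 4 * (Suc k) ^ 2"
    using Suc by (simp add: power2_eq_square)
  finally show ?case .
qed simp

text \<open>Rotating the low qubits after each stage keeps the output in natural order; it replaces the final
  bit reversal of the textbook QFT circuit.\<close>

lemma block_dft_mat_Suc_factorization:
  assumes "Suc k \<le> m"
  shows "single_gate m (Suc k) hadamard *
    (diagonal_mat (2 ^ m) (\<lambda>x. cis (- 2 * pi / 2 ^ Suc k * real (qbit (Suc k) x) * real (x mod 2 ^ k))) *
     (block_dft_mat m k * mono_mat (2 ^ m) (rotate_bits k) (\<lambda>_. 1))) = block_dft_mat m (Suc k)"
  (is "?H * (?C * (?F * ?R)) = _")
proof (rule eq_matI)
  fix i j assume "i < dim_row (block_dft_mat m (Suc k))" "j < dim_col (block_dft_mat m (Suc k))"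
  then have ij: "i < 2 ^ m" "j < 2 ^ m" by auto
  have F_R: "?F * ?R \<in> carrier_mat (2 ^ m) (2 ^ m)"
    using mult_carrier_mat[OF block_dft_mat_carrier mono_mat_carrier] .
  have C_F_R: "?C * (?F * ?R) \<in> carrier_mat (2 ^ m) (2 ^ m)"
    using mult_carrier_mat[OF mono_mat_carrier F_R] .
  have entry: "(?C * (?F * ?R)) $$ (p, j) =
      cis (- 2 * pi / 2 ^ Suc k * real (qbit (Suc k) p) * real (p mod 2 ^ k)) * ?F $$ (p, rotate_bits k j)"
    if "p < 2 ^ m" for p
  proof -
    have "(?C * (?F * ?R)) $$ (p, j) =
        cis (- 2 * pi / 2 ^ Suc k * real (qbit (Suc k) p) * real (p mod 2 ^ k)) * (?F * ?R) $$ (p, j)"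
      by (rule index_mono_mat_mult[OF F_R]) (use that ij in auto)
    also have "(?F * ?R) $$ (p, j) = ?F $$ (p, rotate_bits k j) * 1"
      by (rule index_mult_mono_mat[OF block_dft_mat_carrier]) (use that ij assms rotate_bits_less in auto)
    finally show ?thesis by simp
  qed
  have "(?H * (?C * (?F * ?R))) $$ (i, j) =
      hadamard $$ (qbit (Suc k) i, 0) * (?C * (?F * ?R)) $$ (put_bit k 0 i, j) +
      hadamard $$ (qbit (Suc k) i, 1) * (?C * (?F * ?R)) $$ (put_bit k 1 i, j)"
    by (rule index_single_gate_mult[OF _ hadamard_carrier C_F_R]) (use ij assms in auto)
  also have "\<dots> = block_dft_mat m (Suc k) $$ (i, j)"
    using ij assms entry[OF put_bit_less[of 0 i m k]] entry[OF put_bit_less[of 1 i m k]]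
    by (simp add: index_block_dft_mat_Suc qbit_put_bit put_bit_mod del: index_mult_mat power_Suc)
  finally show "(?H * (?C * (?F * ?R))) $$ (i, j) = block_dft_mat m (Suc k) $$ (i, j)" .
qed (use assms single_gate_carrier[of k m hadamard] in auto)

lemma circuit_prod_qft_circuit: "k \<le> m \<Longrightarrow> circuit_prod m (qft_circuit m k) = block_dft_mat m k"
proof (induction k)
  case 0
  then show ?case by (simp add: block_dft_mat_0)
next
  case (Suc k)
  then have "circuit_prod m (qft_circuit m (Suc k)) = single_gate m (Suc k) hadamard *
      (diagonal_mat (2 ^ m) (\<lambda>x. cis (- 2 * pi / 2 ^ Suc k * real (qbit (Suc k) x) * real (x mod 2 ^ k))) *
       (block_dft_mat m k * mono_mat (2 ^ m) (rotate_bits k) (\<lambda>_. 1)))"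
    by (simp add: circuit_prod_append elementary_circuit_controlled_phase_ramp elementary_circuit_qft_circuit
        elementary_circuit_rotate_bits_circuit circuit_prod_controlled_phase_ramp circuit_prod_rotate_bits_circuit)
  also have "\<dots> = block_dft_mat m (Suc k)"
    using Suc.prems by (rule block_dft_mat_Suc_factorization)
  finally show ?case .
qed


subsection \<open>The odd-frequency DFT\<close>

definition odd_dft_coeff :: "nat \<Rightarrow> nat \<Rightarrow> nat \<Rightarrow> complex" where
  "odd_dft_coeff n x y =
    cis (- ((real x + 1 / 2) * (real y + 1 / 2) * pi / 2 ^ n)) / complex_of_real (sqrt (2 ^ Suc n))"

definition odd_dft_mat :: "nat \<Rightarrow> complex mat" where
  "odd_dft_mat n = mat (2 ^ Suc n) (2 ^ Suc n) (\<lambda>(x, y). odd_dft_coeff n x y)"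

lemma odd_dft_mat_carrier [simp]: "odd_dft_mat n \<in> carrier_mat (2 ^ Suc n) (2 ^ Suc n)"
  and dim_row_odd_dft_mat [simp]: "dim_row (odd_dft_mat n) = 2 ^ Suc n"
  and dim_col_odd_dft_mat [simp]: "dim_col (odd_dft_mat n) = 2 ^ Suc n"
  by (simp_all add: odd_dft_mat_def)

lemma odd_dft_coeff_eq_dft_coeff:
  "odd_dft_coeff n x y =
    cis (- pi / 2 ^ Suc (Suc n)) * cis (- pi / 2 ^ Suc n * real x) * dft_coeff (Suc n) x y * cis (- pi / 2 ^ Suc n * real y)"
proof -
  have "- ((real x + 1 / 2) * (real y + 1 / 2) * pi / 2 ^ n) =
      - pi / 2 ^ Suc (Suc n) + - pi / 2 ^ Suc n * real x + - 2 * pi * real x * real y / 2 ^ Suc n + - pi / 2 ^ Suc n * real y"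
    by (simp add: field_simps)
  then show ?thesis
    by (simp add: odd_dft_coeff_def dft_coeff_def cis_mult)
qed

lemma odd_dft_coeff_commute: "odd_dft_coeff n x y = odd_dft_coeff n y x"
  by (simp add: odd_dft_coeff_def mult.commute)

lemma odd_dft_coeff_reflect:
  assumes "x < 2 ^ Suc n"
  shows "odd_dft_coeff n (2 ^ Suc n - 1 - x) y = - cnj (odd_dft_coeff n x y)"
proof -
  have reflected: "real (2 ^ Suc n - 1 - x) + 1 / 2 = 2 * 2 ^ n - (real x + 1 / 2)"
    using assms by (simp add: of_nat_diff)
  have "- ((real (2 ^ Suc n - 1 - x) + 1 / 2) * (real y + 1 / 2) * pi / 2 ^ n) =
      (real x + 1 / 2) * (real y + 1 / 2) * pi / 2 ^ n - pi - 2 * pi * real y"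
    by (simp only: reflected) (simp add: field_simps)
  then show ?thesis
    by (simp add: odd_dft_coeff_def cis_diff_2pi_nat cis_cnj cis_divide[symmetric])
qed

lemma sqrt_two_div_two_pow: "complex_of_real (sqrt (2 / 2 ^ n)) = 2 / complex_of_real (sqrt (2 ^ Suc n))"
proof -
  have "sqrt (2 / 2 ^ n) * sqrt (2 ^ Suc n) = 2"
    by (simp add: real_sqrt_mult[symmetric])
  then show ?thesis
    by (simp add: field_simps flip: of_real_mult)
qed

lemma odd_dft_coeff_add_cnj:
  "odd_dft_coeff n x y + cnj (odd_dft_coeff n x y) =
    complex_of_real (sqrt (2 / 2 ^ n) * cos ((real x + 1 / 2) * (real y + 1 / 2) * pi / 2 ^ n))"
  by (simp add: odd_dft_coeff_def sqrt_two_div_two_pow cis_cnj complex_eq_iff add_divide_distrib[symmetric])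

lemma odd_dft_coeff_diff_cnj:
  "odd_dft_coeff n x y - cnj (odd_dft_coeff n x y) =
    - \<i> * complex_of_real (sqrt (2 / 2 ^ n) * sin ((real x + 1 / 2) * (real y + 1 / 2) * pi / 2 ^ n))"
  by (simp add: odd_dft_coeff_def sqrt_two_div_two_pow cis_cnj complex_eq_iff diff_divide_distrib[symmetric])

definition odd_dft_circuit :: "nat \<Rightarrow> complex mat list" where
  "odd_dft_circuit n =
    single_gate (Suc n) 1 (diag2 (cis (- pi / 2 ^ Suc (Suc n))) (cis (- pi / 2 ^ Suc (Suc n)))) #
    phase_ramp (Suc n) (- pi / 2 ^ Suc n) (Suc n) @ qft_circuit (Suc n) (Suc n) @
    phase_ramp (Suc n) (- pi / 2 ^ Suc n) (Suc n)"

lemma elementary_circuit_odd_dft_circuit: "elementary_circuit (Suc n) (odd_dft_circuit n)"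
  unfolding odd_dft_circuit_def
  by (simp del: phase_ramp.simps qft_circuit.simps add: elementary_gate_single_gate unitary2_diag2
      cnj_cis_mult_cis elementary_circuit_phase_ramp elementary_circuit_qft_circuit)

lemma length_odd_dft_circuit: "length (odd_dft_circuit n) \<le> 4 * (Suc n) ^ 2 + 2 * n + 3"
  using length_qft_circuit[of "Suc n" "Suc n"] by (simp add: odd_dft_circuit_def length_phase_ramp)

lemma circuit_prod_odd_dft_circuit: "circuit_prod (Suc n) (odd_dft_circuit n) = odd_dft_mat n"
proof -
  let ?c = "cis (- pi / 2 ^ Suc (Suc n))"
  let ?d = "\<lambda>x. cis (- pi / 2 ^ Suc n * real (x mod 2 ^ Suc n))"
  let ?D = "diagonal_mat (2 ^ Suc n) ?d"
  let ?F = "block_dft_mat (Suc n) (Suc n)"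
  have "circuit_prod (Suc n) (odd_dft_circuit n) = diagonal_mat (2 ^ Suc n) (\<lambda>_. ?c) * (?D * (?F * ?D))"
    using single_gate_diag2[of 0 "Suc n" ?c ?c]
    by (simp del: phase_ramp.simps qft_circuit.simps add: odd_dft_circuit_def circuit_prod_append
        elementary_circuit_phase_ramp elementary_circuit_qft_circuit circuit_prod_phase_ramp circuit_prod_qft_circuit)
  also have "\<dots> = odd_dft_mat n"
  proof (rule eq_matI)
    fix x y assume "x < dim_row (odd_dft_mat n)" "y < dim_col (odd_dft_mat n)"
    then have xy: "x < 2 ^ Suc n" "y < 2 ^ Suc n"
      by simp_all
    have F_D: "?F * ?D \<in> carrier_mat (2 ^ Suc n) (2 ^ Suc n)"
      using mult_carrier_mat[OF block_dft_mat_carrier mono_mat_carrier] .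
    have D_F_D: "?D * (?F * ?D) \<in> carrier_mat (2 ^ Suc n) (2 ^ Suc n)"
      using mult_carrier_mat[OF mono_mat_carrier F_D] .
    have "(diagonal_mat (2 ^ Suc n) (\<lambda>_. ?c) * (?D * (?F * ?D))) $$ (x, y) = ?c * (?D * (?F * ?D)) $$ (x, y)"
      by (rule index_mono_mat_mult[OF D_F_D]) (use xy in auto)
    also have "(?D * (?F * ?D)) $$ (x, y) = ?d x * (?F * ?D) $$ (x, y)"
      by (rule index_mono_mat_mult[OF F_D]) (use xy in auto)
    also have "(?F * ?D) $$ (x, y) = ?F $$ (x, y) * ?d y"
      by (rule index_mult_mono_mat[OF block_dft_mat_carrier]) (use xy in auto)
    finally show "(diagonal_mat (2 ^ Suc n) (\<lambda>_. ?c) * (?D * (?F * ?D))) $$ (x, y) = odd_dft_mat n $$ (x, y)"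
      using xy by (simp add: index_block_dft_mat odd_dft_mat_def odd_dft_coeff_eq_dft_coeff mult.assoc
          del: power_Suc)
  qed (use mult_carrier_mat[OF mono_mat_carrier mult_carrier_mat[OF mono_mat_carrier
        mult_carrier_mat[OF block_dft_mat_carrier mono_mat_carrier]]] in simp_all)
  finally show ?thesis .
qed


subsection \<open>The butterfly\<close>

fun fanout_circuit :: "nat \<Rightarrow> nat \<Rightarrow> nat \<Rightarrow> complex mat list" where
  "fanout_circuit m c 0 = []"
| "fanout_circuit m c (Suc k) = cnot_gate m c (Suc k) # fanout_circuit m c k"

fun fanout_perm :: "nat \<Rightarrow> nat \<Rightarrow> nat \<Rightarrow> nat" where
  "fanout_perm c 0 x = x"
| "fanout_perm c (Suc k) x = cnot_perm c (Suc k) (fanout_perm c k x)"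

lemma elementary_circuit_fanout_circuit: "k < c \<Longrightarrow> c \<le> m \<Longrightarrow> elementary_circuit m (fanout_circuit m c k)"
  by (induction k) (auto intro: elementary_gate_cnot)

lemma length_fanout_circuit: "length (fanout_circuit m c k) = k"
  by (induction k) auto

lemma fanout_perm_less: "x < 2 ^ m \<Longrightarrow> k \<le> m \<Longrightarrow> fanout_perm c k x < 2 ^ m"
  by (induction k) (auto intro: cnot_perm_less)

lemma circuit_prod_fanout_circuit:
  "k \<le> m \<Longrightarrow> circuit_prod m (fanout_circuit m c k) = mono_mat (2 ^ m) (fanout_perm c k) (\<lambda>_. 1)"
  by (induction k)
    (auto simp: one_mat_eq_diagonal_mat cnot_gate_eq_mono_mat mono_mat_mult fanout_perm_less
      intro!: mono_mat_cong)

lemma bit_fanout_perm: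
  "k \<le> n \<Longrightarrow> bit (fanout_perm (Suc n) k x) j = (if j < k then bit x j \<noteq> bit x n else bit x j)"
proof (induction k arbitrary: j)
  case (Suc k)
  then have "bit (fanout_perm (Suc n) k x) n = bit x n"
    by auto
  then show ?case using Suc by (auto simp: bit_cnot_perm)
qed simp

lemma fanout_perm_involutive: "fanout_perm (Suc n) n (fanout_perm (Suc n) n x) = x"
  by (rule bit_eqI) (auto simp: bit_fanout_perm)

lemma fanout_perm_low: "x < 2 ^ n \<Longrightarrow> fanout_perm (Suc n) n x = x"
  by (rule bit_eqI) (auto simp: bit_fanout_perm not_bit_if_less_two_pow)

lemma bit_two_pow_minus_1_minus:
  "(r::nat) < 2 ^ n \<Longrightarrow> bit (2 ^ n - 1 - r) j = (j < n \<and> \<not> bit r j)"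
proof (induction n arbitrary: r j)
  case (Suc n)
  define r\<^sub>1 where "r\<^sub>1 = r div 2"
  define r\<^sub>0 where "r\<^sub>0 = r mod 2"
  have r\<^sub>1: "r\<^sub>1 < 2 ^ n"
    using Suc.prems unfolding r\<^sub>1_def by (simp add: less_mult_imp_div_less mult.commute)
  have r\<^sub>0: "r\<^sub>0 < 2" and r: "r = 2 * r\<^sub>1 + r\<^sub>0"
    by (simp_all add: r\<^sub>0_def r\<^sub>1_def)
  have split: "2 ^ Suc n - 1 - r = 2 * (2 ^ n - 1 - r\<^sub>1) + (1 - r\<^sub>0)"
    using r r\<^sub>1 r\<^sub>0 by (simp add: algebra_simps)
  show ?case
  proof (cases j)
    case 0
    then show ?thesis unfolding split using r\<^sub>0 r by (auto simp: bit_0 less_2_cases_iff)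
  next
    case (Suc j')
    have "(2 * (2 ^ n - 1 - r\<^sub>1) + (1 - r\<^sub>0)) div 2 = 2 ^ n - 1 - r\<^sub>1"
      using r\<^sub>0 by auto
    then have "bit (2 ^ Suc n - 1 - r) (Suc j') = bit (2 ^ n - 1 - r\<^sub>1) j'"
      unfolding split by (simp add: bit_Suc)
    moreover have "bit r (Suc j') = bit r\<^sub>1 j'"
      by (simp add: r\<^sub>1_def bit_Suc)
    ultimately show ?thesis
      using Suc.IH[OF r\<^sub>1] Suc by simp
  qed
qed simp

lemma fanout_perm_high: "r < 2 ^ n \<Longrightarrow> fanout_perm (Suc n) n (2 ^ n + r) = 2 ^ Suc n - 1 - r"
proof (rule bit_eqI)
  fix j assume r: "r < 2 ^ n"
  have "bit (0 * 2 ^ Suc n + 1 * 2 ^ n + r) i = (if i < n then bit r i else i = n)" for i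
    using r by (subst bit_digit_split) auto
  then have top: "bit (2 ^ n + r) i = (if i < n then bit r i else i = n)" for i
    by simp
  have r': "r < 2 ^ Suc n"
    using r by simp
  show "bit (fanout_perm (Suc n) n (2 ^ n + r)) j = bit (2 ^ Suc n - 1 - r) j"
    unfolding bit_two_pow_minus_1_minus[OF r'] using r not_bit_if_less_two_pow[OF r, of n]
    by (auto simp: bit_fanout_perm top)
qed


lemma
  assumes "a < 2 ^ Suc n"
  shows qbit_top: "qbit (Suc n) a = a div 2 ^ n"
    and put_bit_top_0: "put_bit n 0 a = a mod 2 ^ n"
    and put_bit_top_1: "put_bit n 1 a = 2 ^ n + a mod 2 ^ n"
proof -
  have "a div 2 ^ Suc n = 0" "a div 2 ^ n < 2"
    using assms by (simp_all add: div_less_iff_less_mult mult.commute)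
  then show "qbit (Suc n) a = a div 2 ^ n" "put_bit n 0 a = a mod 2 ^ n" "put_bit n 1 a = 2 ^ n + a mod 2 ^ n"
    by (simp_all add: qbit_def put_bit_def del: power_Suc)
qed

definition pauli_z :: "complex mat" where
  "pauli_z = diag2 1 (- 1)"

lemma pauli_z_carrier [simp]: "pauli_z \<in> carrier_mat 2 2"
  by (simp add: pauli_z_def)

lemma unitary2_pauli_z: "unitary2 pauli_z"
  unfolding pauli_z_def by (rule unitary2_diag2) simp_all

lemma transpose_pauli_z: "transpose_mat pauli_z = pauli_z"
  by (rule eq_matI) (auto simp: pauli_z_def diag2_def)

definition mirror_index :: "nat \<Rightarrow> nat \<Rightarrow> nat" where
  "mirror_index n a = 2 ^ Suc n - 1 - a mod 2 ^ n"

definition butterfly_sign :: "nat \<Rightarrow> nat \<Rightarrow> complex" where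
  "butterfly_sign n a = (if a < 2 ^ n then - 1 else 1)"

lemma mod_two_pow_less_Suc: "(a::nat) mod 2 ^ n < 2 ^ Suc n"
  by (rule less_le_trans[OF mod_less_divisor]) simp_all

lemma mirror_index_less: "mirror_index n a < 2 ^ Suc n"
  by (simp add: mirror_index_def)

lemma mirror_index_neq: "mirror_index n a \<noteq> a mod 2 ^ n"
proof -
  have "a mod 2 ^ n < 2 ^ n"
    by simp
  then show ?thesis
    unfolding mirror_index_def power_Suc by linarith
qed

definition butterfly_mat :: "nat \<Rightarrow> complex mat" where
  "butterfly_mat n = mat (2 ^ Suc n) (2 ^ Suc n) (\<lambda>(a, x).
    if x = a mod 2 ^ n then inv_sqrt2 else if x = mirror_index n a then butterfly_sign n a * inv_sqrt2 else 0)"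

lemma butterfly_mat_carrier [simp]: "butterfly_mat n \<in> carrier_mat (2 ^ Suc n) (2 ^ Suc n)"
  and dim_row_butterfly_mat [simp]: "dim_row (butterfly_mat n) = 2 ^ Suc n"
  and dim_col_butterfly_mat [simp]: "dim_col (butterfly_mat n) = 2 ^ Suc n"
  by (simp_all add: butterfly_mat_def)

definition butterfly_circuit :: "nat \<Rightarrow> complex mat list" where
  "butterfly_circuit n = single_gate (Suc n) (Suc n) hadamard # single_gate (Suc n) (Suc n) pauli_z #
    fanout_circuit (Suc n) (Suc n) n"

definition butterfly_transpose_circuit :: "nat \<Rightarrow> complex mat list" where
  "butterfly_transpose_circuit n = fanout_circuit (Suc n) (Suc n) n @
    [single_gate (Suc n) (Suc n) pauli_z, single_gate (Suc n) (Suc n) hadamard]"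

lemma elementary_circuit_butterfly_circuit: "elementary_circuit (Suc n) (butterfly_circuit n)"
  and elementary_circuit_butterfly_transpose_circuit: "elementary_circuit (Suc n) (butterfly_transpose_circuit n)"
  by (simp_all add: butterfly_circuit_def butterfly_transpose_circuit_def elementary_circuit_fanout_circuit
      elementary_gate_single_gate unitary2_hadamard unitary2_pauli_z)

lemma
  shows length_butterfly_circuit: "length (butterfly_circuit n) = n + 2"
    and length_butterfly_transpose_circuit: "length (butterfly_transpose_circuit n) = n + 2"
  by (simp_all add: butterfly_circuit_def butterfly_transpose_circuit_def length_fanout_circuit)

lemma index_pauli_z_mult_fanout:
  assumes "k < 2 ^ Suc n" "x < 2 ^ Suc n"
  shows "(single_gate (Suc n) (Suc n) pauli_z * mono_mat (2 ^ Suc n) (fanout_perm (Suc n) n) (\<lambda>_. 1)) $$ (k, x) =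
    (if qbit (Suc n) k = 1 then - 1 else 1) * (if x = fanout_perm (Suc n) n k then 1 else 0)"
proof -
  have Z: "single_gate (Suc n) (Suc n) pauli_z = diagonal_mat (2 ^ Suc n) (\<lambda>k. if qbit (Suc n) k = 1 then - 1 else 1)"
    unfolding pauli_z_def by (rule single_gate_diag2) simp
  have "(k = fanout_perm (Suc n) n x) = (x = fanout_perm (Suc n) n k)"
    using fanout_perm_involutive by metis
  then show ?thesis
    unfolding Z using assms by (subst index_mono_mat_mult[OF mono_mat_carrier]) (auto simp: index_mono_mat)
qed

lemma butterfly_factorization:
  "single_gate (Suc n) (Suc n) hadamard *
    (single_gate (Suc n) (Suc n) pauli_z * mono_mat (2 ^ Suc n) (fanout_perm (Suc n) n) (\<lambda>_. 1)) = butterfly_mat n"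
  (is "?H * ?ZP = _")
proof (rule eq_matI)
  fix a x assume "a < dim_row (butterfly_mat n)" "x < dim_col (butterfly_mat n)"
  then have ax: "a < 2 ^ Suc n" "x < 2 ^ Suc n"
    by simp_all
  let ?A = "a mod 2 ^ n"
  have ZP: "?ZP \<in> carrier_mat (2 ^ Suc n) (2 ^ Suc n)"
    using mult_carrier_mat[OF single_gate_carrier[of n "Suc n" pauli_z] mono_mat_carrier] by simp
  have A: "?A < 2 ^ n"
    by simp
  then have "?A < 2 ^ Suc n" "2 ^ n + ?A < 2 ^ Suc n" "qbit (Suc n) ?A = 0" "qbit (Suc n) (2 ^ n + ?A) = 1"
    unfolding power_Suc by (linarith, linarith, simp_all add: qbit_def)
  then have "?ZP $$ (?A, x) = (if x = ?A then 1 else 0)"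
    "?ZP $$ (2 ^ n + ?A, x) = - (if x = mirror_index n a then 1 else 0)"
    using ax A by (simp_all add: index_pauli_z_mult_fanout fanout_perm_low fanout_perm_high mirror_index_def
        del: power_Suc)
  moreover have "(?H * ?ZP) $$ (a, x) =
      hadamard $$ (qbit (Suc n) a, 0) * ?ZP $$ (put_bit n 0 a, x) + hadamard $$ (qbit (Suc n) a, 1) * ?ZP $$ (put_bit n 1 a, x)"
    by (rule index_single_gate_mult[OF _ hadamard_carrier ZP]) (use ax in auto)
  ultimately have "(?H * ?ZP) $$ (a, x) =
      hadamard $$ (a div 2 ^ n, 0) * (if x = ?A then 1 else 0) - hadamard $$ (a div 2 ^ n, 1) * (if x = mirror_index n a then 1 else 0)"
    unfolding qbit_top[OF ax(1)] put_bit_top_0[OF ax(1)] put_bit_top_1[OF ax(1)] by simp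
  also have "\<dots> = butterfly_mat n $$ (a, x)"
    using ax mirror_index_neq[of n a]
    by (auto simp: butterfly_mat_def butterfly_sign_def hadamard_def not_less div_less_iff_less_mult le_div_geq)
  finally show "(?H * ?ZP) $$ (a, x) = butterfly_mat n $$ (a, x)" .
qed (use single_gate_carrier[OF _ hadamard_carrier, of n "Suc n"] in simp_all)

lemma circuit_prod_butterfly_circuit: "circuit_prod (Suc n) (butterfly_circuit n) = butterfly_mat n"
  using butterfly_factorization[of n] by (simp add: butterfly_circuit_def circuit_prod_fanout_circuit)

lemma circuit_prod_butterfly_transpose_circuit:
  "circuit_prod (Suc n) (butterfly_transpose_circuit n) = transpose_mat (butterfly_mat n)"
proof -
  let ?H = "single_gate (Suc n) (Suc n) hadamard"
  let ?Z = "single_gate (Suc n) (Suc n) pauli_z"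
  let ?P = "mono_mat (2 ^ Suc n) (fanout_perm (Suc n) n) (\<lambda>_. 1)"
  have H: "?H \<in> carrier_mat (2 ^ Suc n) (2 ^ Suc n)" and Z: "?Z \<in> carrier_mat (2 ^ Suc n) (2 ^ Suc n)"
    by (rule single_gate_carrier; simp add: pauli_z_def)+
  have "transpose_mat (butterfly_mat n) = transpose_mat (?H * (?Z * ?P))"
    unfolding butterfly_factorization ..
  also have "\<dots> = (transpose_mat ?P * transpose_mat ?Z) * transpose_mat ?H"
    unfolding transpose_mult[OF H mult_carrier_mat[OF Z mono_mat_carrier]] transpose_mult[OF Z mono_mat_carrier] ..
  also have "transpose_mat ?P = ?P"
  proof -
    have "j < 2 ^ Suc n \<Longrightarrow> fanout_perm (Suc n) n j < 2 ^ Suc n" for j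
      by (rule fanout_perm_less) simp_all
    then show ?thesis
      using transpose_mono_mat[of "2 ^ Suc n" "fanout_perm (Suc n) n"] fanout_perm_involutive by simp
  qed
  also have "transpose_mat ?Z = ?Z"
    by (simp add: transpose_single_gate transpose_pauli_z)
  also have "transpose_mat ?H = ?H"
    by (simp add: transpose_single_gate transpose_hadamard)
  also have "(?P * ?Z) * ?H = ?P * (?Z * ?H)"
    by (rule assoc_mult_mat[OF mono_mat_carrier Z H])
  also have "\<dots> = circuit_prod (Suc n) (butterfly_transpose_circuit n)"
    using H Z by (simp add: butterfly_transpose_circuit_def circuit_prod_append elementary_circuit_fanout_circuit
        circuit_prod_fanout_circuit elementary_gate_single_gate unitary2_hadamard unitary2_pauli_z)
  finally show ?thesis ..
qed

lemma index_butterfly_mat_mult: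
  assumes "X \<in> carrier_mat (2 ^ Suc n) c" "a < 2 ^ Suc n" "j < c"
  shows "(butterfly_mat n * X) $$ (a, j) =
    inv_sqrt2 * (X $$ (a mod 2 ^ n, j) + butterfly_sign n a * X $$ (mirror_index n a, j))"
proof -
  have "(butterfly_mat n * X) $$ (a, j) = (\<Sum>k\<in>{0..<2 ^ Suc n}. butterfly_mat n $$ (a, k) * X $$ (k, j))"
    using assms by (intro index_mult_mat_sum) auto
  also have "\<dots> = butterfly_mat n $$ (a, a mod 2 ^ n) * X $$ (a mod 2 ^ n, j) +
      butterfly_mat n $$ (a, mirror_index n a) * X $$ (mirror_index n a, j)"
    using assms mod_two_pow_less_Suc mirror_index_less mirror_index_neq[of n a]
    by (intro sum_atLeastLessThan_pair) (auto simp: butterfly_mat_def simp del: power_Suc)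
  finally show ?thesis
    using assms mod_two_pow_less_Suc mirror_index_less mirror_index_neq[of n a]
    by (simp add: butterfly_mat_def algebra_simps del: power_Suc)
qed

lemma index_mult_transpose_butterfly_mat:
  assumes "X \<in> carrier_mat r (2 ^ Suc n)" "i < r" "b < 2 ^ Suc n"
  shows "(X * transpose_mat (butterfly_mat n)) $$ (i, b) =
    inv_sqrt2 * (X $$ (i, b mod 2 ^ n) + butterfly_sign n b * X $$ (i, mirror_index n b))"
proof -
  have "(X * transpose_mat (butterfly_mat n)) $$ (i, b) =
      (\<Sum>k\<in>{0..<2 ^ Suc n}. X $$ (i, k) * butterfly_mat n $$ (b, k))"
    using assms by (subst index_mult_mat_sum[OF assms(1), of "transpose_mat (butterfly_mat n)" "2 ^ Suc n"]) auto
  also have "\<dots> = X $$ (i, b mod 2 ^ n) * butterfly_mat n $$ (b, b mod 2 ^ n) +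
      X $$ (i, mirror_index n b) * butterfly_mat n $$ (b, mirror_index n b)"
    using assms mod_two_pow_less_Suc mirror_index_less mirror_index_neq[of n b]
    by (intro sum_atLeastLessThan_pair) (auto simp: butterfly_mat_def simp del: power_Suc)
  finally show ?thesis
    using assms mod_two_pow_less_Suc mirror_index_less mirror_index_neq[of n b]
    by (simp add: butterfly_mat_def algebra_simps del: power_Suc)
qed

lemma index_butterfly_conjugate:
  assumes "X \<in> carrier_mat (2 ^ Suc n) (2 ^ Suc n)" "a < 2 ^ Suc n" "b < 2 ^ Suc n"
  shows "(butterfly_mat n * (X * transpose_mat (butterfly_mat n))) $$ (a, b) =
    (X $$ (a mod 2 ^ n, b mod 2 ^ n) + butterfly_sign n b * X $$ (a mod 2 ^ n, mirror_index n b)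
     + butterfly_sign n a * X $$ (mirror_index n a, b mod 2 ^ n)
     + butterfly_sign n a * butterfly_sign n b * X $$ (mirror_index n a, mirror_index n b)) / 2"
proof -
  have XB: "X * transpose_mat (butterfly_mat n) \<in> carrier_mat (2 ^ Suc n) (2 ^ Suc n)"
    using mult_carrier_mat[OF assms(1) transpose_carrier_mat[THEN iffD2, OF butterfly_mat_carrier]] .
  have "(butterfly_mat n * (X * transpose_mat (butterfly_mat n))) $$ (a, b) = inv_sqrt2 * inv_sqrt2 *
      (X $$ (a mod 2 ^ n, b mod 2 ^ n) + butterfly_sign n b * X $$ (a mod 2 ^ n, mirror_index n b)
       + butterfly_sign n a * X $$ (mirror_index n a, b mod 2 ^ n)
       + butterfly_sign n a * butterfly_sign n b * X $$ (mirror_index n a, mirror_index n b))"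
    unfolding index_butterfly_mat_mult[OF XB assms(2,3)]
      index_mult_transpose_butterfly_mat[OF assms(1) mod_two_pow_less_Suc assms(3)]
      index_mult_transpose_butterfly_mat[OF assms(1) mirror_index_less assms(3)]
    by (simp add: algebra_simps)
  then show ?thesis
    by (simp add: inv_sqrt2_mult_self)
qed


subsection \<open>The cosine and sine transforms\<close>

lemma index_block_diag:
  assumes "A \<in> carrier_mat n n" "B \<in> carrier_mat k k" "i < n + k" "j < n + k"
  shows "block_diag A B $$ (i, j) =
    (if i < n \<and> j < n then A $$ (i, j) else if n \<le> i \<and> n \<le> j then B $$ (i - n, j - n) else 0)"
  using assms by (auto simp: block_diag_def)

lemma block_diag_carrier:
  "A \<in> carrier_mat n n \<Longrightarrow> B \<in> carrier_mat k k \<Longrightarrow> block_diag A B \<in> carrier_mat (n + k) (n + k)"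
  unfolding block_diag_def by (rule four_block_carrier_mat)

lemma DCT4_carrier: "DCT4 N \<in> carrier_mat N N"
  and DST4_carrier: "DST4 N \<in> carrier_mat N N"
  by (simp_all add: DCT4_def DST4_def)

lemma odd_dft_mat_mirror_row:
  "y < 2 ^ Suc n \<Longrightarrow> odd_dft_mat n $$ (mirror_index n a, y) = - cnj (odd_dft_mat n $$ (a mod 2 ^ n, y))"
  using mirror_index_less[of n a] mod_two_pow_less_Suc[of a n]
    odd_dft_coeff_reflect[of "a mod 2 ^ n" n y, OF mod_two_pow_less_Suc]
  by (simp add: odd_dft_mat_def mirror_index_def)

lemma odd_dft_mat_mirror_col:
  "x < 2 ^ Suc n \<Longrightarrow> odd_dft_mat n $$ (x, mirror_index n b) = - cnj (odd_dft_mat n $$ (x, b mod 2 ^ n))"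
  using mirror_index_less[of n b] mod_two_pow_less_Suc[of b n]
    odd_dft_coeff_reflect[of "b mod 2 ^ n" n x, OF mod_two_pow_less_Suc]
  by (simp add: odd_dft_mat_def mirror_index_def odd_dft_coeff_commute[of n x])

lemma index_butterfly_conjugate_odd_dft:
  assumes "a < 2 ^ Suc n" "b < 2 ^ Suc n"
  defines "g \<equiv> odd_dft_coeff n (a mod 2 ^ n) (b mod 2 ^ n)"
  shows "(butterfly_mat n * (odd_dft_mat n * transpose_mat (butterfly_mat n))) $$ (a, b) =
    (g + butterfly_sign n a * butterfly_sign n b * g - (butterfly_sign n a + butterfly_sign n b) * cnj g) / 2"
proof -
  have "odd_dft_mat n $$ (a mod 2 ^ n, b mod 2 ^ n) = g"
    using mod_two_pow_less_Suc by (simp add: odd_dft_mat_def g_def del: power_Suc)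
  then show ?thesis
    unfolding index_butterfly_conjugate[OF odd_dft_mat_carrier assms(1,2)]
      odd_dft_mat_mirror_row[OF mirror_index_less] odd_dft_mat_mirror_row[OF mod_two_pow_less_Suc]
      odd_dft_mat_mirror_col[OF mod_two_pow_less_Suc]
    by (simp add: algebra_simps)
qed

lemma butterfly_conjugate_odd_dft:
  "butterfly_mat n * (odd_dft_mat n * transpose_mat (butterfly_mat n)) =
    block_diag (DCT4 (2 ^ n)) ((- \<i>) \<cdot>\<^sub>m DST4 (2 ^ n))"
  (is "?L = ?R")
proof (rule eq_matI)
  define N :: nat where "N = 2 ^ n"
  have R: "?R \<in> carrier_mat (N + N) (N + N)"
    unfolding N_def by (rule block_diag_carrier[OF DCT4_carrier smult_carrier_mat[OF DST4_carrier]])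
  fix a b assume "a < dim_row ?R" "b < dim_col ?R"
  then have ab: "a < N + N" "b < N + N"
    using R by auto
  then have L_ab: "?L $$ (a, b) = (odd_dft_coeff n (a mod N) (b mod N) * (1 + butterfly_sign n a * butterfly_sign n b)
      - (butterfly_sign n a + butterfly_sign n b) * cnj (odd_dft_coeff n (a mod N) (b mod N))) / 2"
    by (simp add: index_butterfly_conjugate_odd_dft N_def algebra_simps del: index_mult_mat)
  have R_ab: "?R $$ (a, b) = (if a < N \<and> b < N then DCT4 N $$ (a, b)
      else if N \<le> a \<and> N \<le> b then - \<i> * DST4 N $$ (a - N, b - N) else 0)"
    using ab by (subst index_block_diag[OF DCT4_carrier smult_carrier_mat[OF DST4_carrier]])
      (auto simp: N_def DST4_carrier[THEN carrier_matD(1)] DST4_carrier[THEN carrier_matD(2)])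
  consider (low) "a < N" "b < N" | (high) "N \<le> a" "N \<le> b" | (mixed) "(a < N) \<noteq> (b < N)"
    by linarith
  then show "?L $$ (a, b) = ?R $$ (a, b)"
  proof cases
    case low
    then have "?L $$ (a, b) = odd_dft_coeff n a b + cnj (odd_dft_coeff n a b)"
      unfolding L_ab by (simp add: butterfly_sign_def N_def)
    then show ?thesis
      unfolding R_ab using low odd_dft_coeff_add_cnj[of n a b] by (simp add: DCT4_def N_def)
  next
    case high
    then have "a mod N = a - N" "b mod N = b - N"
      using ab by (simp_all add: le_mod_geq)
    then have "?L $$ (a, b) = odd_dft_coeff n (a - N) (b - N) - cnj (odd_dft_coeff n (a - N) (b - N))"
      unfolding L_ab using high by (simp add: butterfly_sign_def N_def)
    then show ?thesis
      unfolding R_ab using high ab odd_dft_coeff_diff_cnj[of n "a - N" "b - N"] by (simp add: DST4_def N_def)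
  next
    case mixed
    then show ?thesis
      unfolding L_ab R_ab by (auto simp: butterfly_sign_def N_def)
  qed
qed (use carrier_matD[OF block_diag_carrier[OF DCT4_carrier smult_carrier_mat[OF DST4_carrier, of "- \<i>"]],
      of "2 ^ n"] in \<open>simp_all add: mult_2\<close>)

definition dct4_dst4_circuit :: "nat \<Rightarrow> complex mat list" where
  "dct4_dst4_circuit n = butterfly_circuit n @ odd_dft_circuit n @ butterfly_transpose_circuit n"

lemma elementary_circuit_dct4_dst4_circuit: "elementary_circuit (Suc n) (dct4_dst4_circuit n)"
  by (simp add: dct4_dst4_circuit_def elementary_circuit_butterfly_circuit elementary_circuit_odd_dft_circuit
      elementary_circuit_butterfly_transpose_circuit)

lemma circuit_prod_dct4_dst4_circuit:
  "circuit_prod (Suc n) (dct4_dst4_circuit n) = block_diag (DCT4 (2 ^ n)) ((- \<i>) \<cdot>\<^sub>m DST4 (2 ^ n))"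
  by (simp add: dct4_dst4_circuit_def circuit_prod_append elementary_circuit_butterfly_circuit
      elementary_circuit_odd_dft_circuit elementary_circuit_butterfly_transpose_circuit
      circuit_prod_butterfly_circuit circuit_prod_odd_dft_circuit circuit_prod_butterfly_transpose_circuit
      butterfly_conjugate_odd_dft)

lemma length_dct4_dst4_circuit: "1 \<le> n \<Longrightarrow> length (dct4_dst4_circuit n) \<le> 27 * n ^ 2"
proof -
  assume "1 \<le> n"
  then have "n \<le> n ^ 2" "1 \<le> n ^ 2"
    by (simp_all add: power2_eq_square)
  moreover have "length (dct4_dst4_circuit n) \<le> 4 * n ^ 2 + 12 * n + 11"
    using length_odd_dft_circuit[of n]
    by (simp add: dct4_dst4_circuit_def length_butterfly_circuit length_butterfly_transpose_circuit
        power2_eq_square algebra_simps)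
  ultimately show ?thesis
    by linarith
qed

lemma realizes_without_ancilla:
  assumes "elementary_circuit m gs" "circuit_prod m gs = W"
  shows "realizes m 0 gs W"
proof -
  have kron_ket0: "kron X (ket0 0) = X" for X
    by (rule eq_matI) (auto simp: kron_def ket0_def)
  show ?thesis
    using assms circuit_prod_carrier[OF assms(1)]
    by (auto simp: realizes_def elementary_circuit_def kron_ket0)
qed

theorem mainTheorem2:
  shows "\<exists>c::real. c > 0 \<and> (\<exists>A::nat. \<forall>n::nat. n \<ge> 1 \<longrightarrow>
           (\<exists>a gs. a \<le> A \<and> real (length gs) \<le> c * real n ^ 2 \<and>
              realizes (n + 1) a gs
                (block_diag (DCT4 (2 ^ n)) ((- \<i>) \<cdot>\<^sub>m DST4 (2 ^ n)))))"
proof -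
  have "\<exists>a gs. a \<le> 0 \<and> real (length gs) \<le> 27 * real n ^ 2 \<and>
      realizes (n + 1) a gs (block_diag (DCT4 (2 ^ n)) ((- \<i>) \<cdot>\<^sub>m DST4 (2 ^ n)))" if "n \<ge> 1" for n
  proof (intro exI conjI)
    show "real (length (dct4_dst4_circuit n)) \<le> 27 * real n ^ 2"
      using that length_dct4_dst4_circuit[of n] by (simp flip: of_nat_power)
    show "realizes (n + 1) 0 (dct4_dst4_circuit n) (block_diag (DCT4 (2 ^ n)) ((- \<i>) \<cdot>\<^sub>m DST4 (2 ^ n)))"
      using realizes_without_ancilla elementary_circuit_dct4_dst4_circuit circuit_prod_dct4_dst4_circuit by simp
  qed simp
  then show ?thesis
    by (intro exI[of _ "27::real"] conjI exI[of _ "0::nat"]) simp_all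
qed

end
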